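(* Every Coxeter group is pq-generated; that is, for a Coxeter group $W$ with Coxeter generating set $S$ (presentation $\langle S\mid s^2=e\ (s\in S),\ (st)^{m_{st}}=e\ (s\neq t,\ m_{st}<\infty)\rangle$ with integers $m_{st}\geq 2$), there exists a power quandle $P$ with $W\cong\mathrm{Gr}(P)$. In particular this holds for the symmetric groups.
   Context: A power quandle $(P,\rhd,\pi,e)$ consists of a set $P$, a binary operation $\rhd$, an element $e$, and maps $\pi^n\colon P\to P$ ($n\in\mathbb{Z}$) satisfying: each $\lambda_a\colon b\mapsto a\rhd b$ is bijective and $a\rhd(b\rhd c)=(a\rhd b)\rhd(a\rhd c)$; $a\rhd a=a$; $e\rhd b=b$, $a\rhd e=e$; $\pi^1=\mathrm{id}$, $\pi^m\circ\pi^n=\pi^{mn}$; $\pi^0(a)=e$; $a\rhd\pi^n(b)=\pi^n(a\rhd b)$; $\pi^n(a)\rhd b=\lambda_a^n(b)$. For a power quandle $P$, $\mathrm{Gr}(P)$ is the group with generators $\sigma(a)$, $a\in P$, and relations $\sigma(a\rhd b)=\sigma(a)\sigma(b)\sigma(a)^{-1}$, $\sigma(\pi^n(a))=\sigma(a)^n$, $\sigma(e)=1$. A group $G$ is pq-generated if there exists a power quandle $P$ with $G\cong\mathrm{Gr}(P)$. *)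

theory Defs
  imports "HOL-Algebra.Algebra" "HOL-Library.Extended_Nat"
begin

text \<open>Words over generators: a letter (x, False) stands for x, (x, True) for x inverse.
  A relation is a pair of words (l, r) meaning l = r.\<close>

type_synonym 'a word = "('a \<times> bool) list"

inductive pres_eq :: "'a set \<Rightarrow> ('a word \<times> 'a word) set \<Rightarrow> 'a word \<Rightarrow> 'a word \<Rightarrow> bool"
  for Xg :: "'a set" and Rl :: "('a word \<times> 'a word) set" where
  refl: "pres_eq Xg Rl w w"
| sym: "pres_eq Xg Rl u v \<Longrightarrow> pres_eq Xg Rl v u"
| trans: "pres_eq Xg Rl u v \<Longrightarrow> pres_eq Xg Rl v w \<Longrightarrow> pres_eq Xg Rl u w"
| cong: "pres_eq Xg Rl u v \<Longrightarrow> pres_eq Xg Rl (p @ u @ q) (p @ v @ q)"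
| cancel: "x \<in> Xg \<Longrightarrow> pres_eq Xg Rl [(x, b), (x, \<not> b)] []"
| rel: "(l, r) \<in> Rl \<Longrightarrow> pres_eq Xg Rl l r"

definition gen_words :: "'a set \<Rightarrow> 'a word set" where
  "gen_words Xg = lists (Xg \<times> UNIV)"

definition pres_class :: "'a set \<Rightarrow> ('a word \<times> 'a word) set \<Rightarrow> 'a word \<Rightarrow> 'a word set" where
  "pres_class Xg Rl w = {v \<in> gen_words Xg. pres_eq Xg Rl w v}"

definition presented_group :: "'a set \<Rightarrow> ('a word \<times> 'a word) set \<Rightarrow> 'a word set monoid" where
  "presented_group Xg Rl =
     \<lparr> carrier = pres_class Xg Rl ` gen_words Xg,
       monoid.mult = (\<lambda>A B. {w \<in> gen_words Xg. \<exists>a\<in>A. \<exists>b\<in>B. pres_eq Xg Rl w (a @ b)}),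
       monoid.one = pres_class Xg Rl [] \<rparr>"

definition gen_pow_word :: "'a \<Rightarrow> int \<Rightarrow> 'a word" where
  "gen_pow_word x n = replicate (nat \<bar>n\<bar>) (x, n < 0)"

definition bij_int_pow :: "'a set \<Rightarrow> ('a \<Rightarrow> 'a) \<Rightarrow> int \<Rightarrow> 'a \<Rightarrow> 'a" where
  "bij_int_pow P f n = (if 0 \<le> n then f ^^ nat n else the_inv_into P f ^^ nat (- n))"

text \<open>(P, op, pw, e) is a power quandle; \<open>op a b\<close> is \<open>a \<rhd> b\<close>, \<open>pw n a\<close> is \<open>\<pi>^n(a)\<close>.\<close>
definition power_quandle ::
  "'a set \<Rightarrow> ('a \<Rightarrow> 'a \<Rightarrow> 'a) \<Rightarrow> (int \<Rightarrow> 'a \<Rightarrow> 'a) \<Rightarrow> 'a \<Rightarrow> bool" where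
  "power_quandle P op pw e \<longleftrightarrow>
     e \<in> P \<and>
     (\<forall>a\<in>P. \<forall>b\<in>P. op a b \<in> P) \<and>
     (\<forall>n. \<forall>a\<in>P. pw n a \<in> P) \<and>
     (\<forall>a\<in>P. bij_betw (op a) P P) \<and>
     (\<forall>a\<in>P. \<forall>b\<in>P. \<forall>c\<in>P. op a (op b c) = op (op a b) (op a c)) \<and>
     (\<forall>a\<in>P. op a a = a) \<and>
     (\<forall>b\<in>P. op e b = b) \<and>
     (\<forall>a\<in>P. op a e = e) \<and>
     (\<forall>a\<in>P. pw 1 a = a) \<and>
     (\<forall>m n. \<forall>a\<in>P. pw m (pw n a) = pw (m * n) a) \<and>
     (\<forall>a\<in>P. pw 0 a = e) \<and>
     (\<forall>n. \<forall>a\<in>P. \<forall>b\<in>P. op a (pw n b) = pw n (op a b)) \<and>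
     (\<forall>n. \<forall>a\<in>P. \<forall>b\<in>P. op (pw n a) b = bij_int_pow P (op a) n b)"

definition Gr_rels ::
  "'a set \<Rightarrow> ('a \<Rightarrow> 'a \<Rightarrow> 'a) \<Rightarrow> (int \<Rightarrow> 'a \<Rightarrow> 'a) \<Rightarrow> 'a \<Rightarrow> ('a word \<times> 'a word) set" where
  "Gr_rels P op pw e =
     {([(op a b, False)], [(a, False), (b, False), (a, True)]) | a b. a \<in> P \<and> b \<in> P}
   \<union> {([(pw n a, False)], gen_pow_word a n) | a n. a \<in> P}
   \<union> {([(e, False)], [])}"

definition Gr ::
  "'a set \<Rightarrow> ('a \<Rightarrow> 'a \<Rightarrow> 'a) \<Rightarrow> (int \<Rightarrow> 'a \<Rightarrow> 'a) \<Rightarrow> 'a \<Rightarrow> 'a word set monoid" where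
  "Gr P op pw e = presented_group P (Gr_rels P op pw e)"

definition coxeter_matrix :: "'b set \<Rightarrow> ('b \<Rightarrow> 'b \<Rightarrow> enat) \<Rightarrow> bool" where
  "coxeter_matrix S m \<longleftrightarrow>
     (\<forall>s\<in>S. \<forall>t\<in>S. m s t = m t s) \<and> (\<forall>s\<in>S. \<forall>t\<in>S. s \<noteq> t \<longrightarrow> 2 \<le> m s t)"

definition coxeter_rels :: "'b set \<Rightarrow> ('b \<Rightarrow> 'b \<Rightarrow> enat) \<Rightarrow> ('b word \<times> 'b word) set" where
  "coxeter_rels S m =
     {([(s, False), (s, False)], []) | s. s \<in> S}
   \<union> {(concat (replicate (the_enat (m s t)) [(s, False), (t, False)]), []) | s t.
        s \<in> S \<and> t \<in> S \<and> s \<noteq> t \<and> m s t \<noteq> \<infinity>}"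

definition coxeter_group :: "'b set \<Rightarrow> ('b \<Rightarrow> 'b \<Rightarrow> enat) \<Rightarrow> 'b word set monoid" where
  "coxeter_group S m = presented_group S (coxeter_rels S m)"

end

theory Submission
  imports Defs
begin

text \<open>
  Take for \<open>P\<close> the reflections of \<open>W\<close> (the conjugates of the Coxeter generators) together
  with \<open>1\<close>. Its elements are involutions and it is closed under conjugation, so conjugation
  \<open>a \<rhd> b = a b a\<^sup>-\<^sup>1\<close> and \<open>\<pi>\<^sup>n(a) = a\<^sup>n\<close> (that is, \<open>a\<close> or \<open>1\<close> according to the parity of \<open>n\<close>) make it
  a power quandle. The map \<open>s \<mapsto> \<sigma>(s)\<close> respects the Coxeter relations: \<open>\<sigma>(s)\<^sup>2 = \<sigma>(\<pi>\<^sup>2 s) = 1\<close>,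
  and since \<open>(st)\<^sup>k s\<close> is an iterated conjugate of a generator by generators,
  \<open>\<sigma>((st)\<^sup>k s) = (\<sigma>(s)\<sigma>(t))\<^sup>k \<sigma>(s)\<close>; with \<open>(st)\<^sup>m\<^sup>-\<^sup>1 s = t\<close> this gives
  \<open>(\<sigma>(s)\<sigma>(t))\<^sup>m = \<sigma>(t)\<^sup>2 = 1\<close>. Conversely \<open>\<sigma>(p) \<mapsto> p\<close> respects the relations of \<open>Gr(P)\<close>, and the
  two homomorphisms are inverse to each other because every reflection is obtained from the
  generators by repeated conjugation with generators.
\<close>

section \<open>Presented groups\<close>

lemma pres_eq_append:
  assumes "pres_eq Xg Rl u u'" "pres_eq Xg Rl v v'"
  shows "pres_eq Xg Rl (u @ v) (u' @ v')"
proof -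
  have "pres_eq Xg Rl ([] @ u @ v) ([] @ u' @ v)" by (rule pres_eq.cong[OF assms(1)])
  moreover have "pres_eq Xg Rl (u' @ v @ []) (u' @ v' @ [])" by (rule pres_eq.cong[OF assms(2)])
  ultimately show ?thesis by (auto intro: pres_eq.trans)
qed

lemma gen_words_simps [simp]:
  "[] \<in> gen_words Xg"
  "(a # w \<in> gen_words Xg) = (fst a \<in> Xg \<and> w \<in> gen_words Xg)"
  "(u @ v \<in> gen_words Xg) = (u \<in> gen_words Xg \<and> v \<in> gen_words Xg)"
  by (auto simp: gen_words_def mem_Times_iff)

lemma pres_class_eqI: "pres_eq Xg Rl u v \<Longrightarrow> pres_class Xg Rl u = pres_class Xg Rl v"
  unfolding pres_class_def by (auto intro: pres_eq.trans pres_eq.sym)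

lemma pres_class_self: "u \<in> gen_words Xg \<Longrightarrow> u \<in> pres_class Xg Rl u"
  unfolding pres_class_def by (auto intro: pres_eq.refl)

lemma presented_group_carrier: "carrier (presented_group Xg Rl) = pres_class Xg Rl ` gen_words Xg"
  by (simp add: presented_group_def)

lemma pres_class_carrier: "u \<in> gen_words Xg \<Longrightarrow> pres_class Xg Rl u \<in> carrier (presented_group Xg Rl)"
  by (simp add: presented_group_carrier)

lemma presented_group_one: "\<one>\<^bsub>presented_group Xg Rl\<^esub> = pres_class Xg Rl []"
  by (simp add: presented_group_def)

lemma pres_class_mult:
  assumes "u \<in> gen_words Xg" "v \<in> gen_words Xg"
  shows "pres_class Xg Rl u \<otimes>\<^bsub>presented_group Xg Rl\<^esub> pres_class Xg Rl v = pres_class Xg Rl (u @ v)"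
proof -
  have "(\<exists>a\<in>pres_class Xg Rl u. \<exists>b\<in>pres_class Xg Rl v. pres_eq Xg Rl w (a @ b))
          \<longleftrightarrow> pres_eq Xg Rl (u @ v) w" for w
    using assms pres_class_self[of _ Xg Rl]
    unfolding pres_class_def by (blast intro: pres_eq.sym pres_eq.trans pres_eq_append)
  then show ?thesis by (simp add: presented_group_def pres_class_def)
qed

definition inv_word :: "'a word \<Rightarrow> 'a word" where
  "inv_word w = rev (map (\<lambda>(x, b). (x, \<not> b)) w)"

lemma inv_word_gen_words: "w \<in> gen_words Xg \<Longrightarrow> inv_word w \<in> gen_words Xg"
  by (auto simp: inv_word_def gen_words_def)

lemma pres_eq_inv_word_append: "u \<in> gen_words Xg \<Longrightarrow> pres_eq Xg Rl (inv_word u @ u) []"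
proof (induction u)
  case Nil
  then show ?case by (simp add: inv_word_def pres_eq.refl)
next
  case (Cons a u)
  obtain x b where a: "a = (x, b)" by (cases a)
  have "pres_eq Xg Rl (inv_word u @ [(x, \<not> b), (x, \<not>\<not> b)] @ u) (inv_word u @ [] @ u)"
    using Cons.prems a by (intro pres_eq.cong pres_eq.cancel) simp
  then show ?case
    using Cons a by (auto simp: inv_word_def intro: pres_eq.trans)
qed

lemma group_presented_group: "group (presented_group Xg Rl)"
proof (rule groupI)
  fix x y assume "x \<in> carrier (presented_group Xg Rl)" "y \<in> carrier (presented_group Xg Rl)"
  then show "x \<otimes>\<^bsub>presented_group Xg Rl\<^esub> y \<in> carrier (presented_group Xg Rl)"
    by (auto simp: pres_class_mult presented_group_carrier)
next
  fix x y z assume "x \<in> carrier (presented_group Xg Rl)" "y \<in> carrier (presented_group Xg Rl)"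
    "z \<in> carrier (presented_group Xg Rl)"
  then show "x \<otimes>\<^bsub>presented_group Xg Rl\<^esub> y \<otimes>\<^bsub>presented_group Xg Rl\<^esub> z =
      x \<otimes>\<^bsub>presented_group Xg Rl\<^esub> (y \<otimes>\<^bsub>presented_group Xg Rl\<^esub> z)"
    by (auto simp: pres_class_mult presented_group_carrier)
next
  fix x assume "x \<in> carrier (presented_group Xg Rl)"
  then obtain u where u: "u \<in> gen_words Xg" "x = pres_class Xg Rl u"
    by (auto simp: presented_group_carrier)
  then show "\<one>\<^bsub>presented_group Xg Rl\<^esub> \<otimes>\<^bsub>presented_group Xg Rl\<^esub> x = x"
    using pres_class_mult[of "[]" Xg u Rl] by (simp add: presented_group_one)
  have "pres_class Xg Rl (inv_word u) \<otimes>\<^bsub>presented_group Xg Rl\<^esub> x = \<one>\<^bsub>presented_group Xg Rl\<^esub>"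
    using u inv_word_gen_words[OF u(1)] pres_eq_inv_word_append[OF u(1), of Rl]
    by (simp add: pres_class_mult presented_group_one pres_class_eqI)
  moreover have "pres_class Xg Rl (inv_word u) \<in> carrier (presented_group Xg Rl)"
    using inv_word_gen_words[OF u(1)] by (simp add: presented_group_carrier)
  ultimately show "\<exists>y\<in>carrier (presented_group Xg Rl).
      y \<otimes>\<^bsub>presented_group Xg Rl\<^esub> x = \<one>\<^bsub>presented_group Xg Rl\<^esub>"
    by blast
qed (simp add: presented_group_carrier presented_group_one)

abbreviation pres_gen :: "'a set \<Rightarrow> ('a word \<times> 'a word) set \<Rightarrow> 'a \<Rightarrow> 'a word set" where
  "pres_gen Xg Rl x \<equiv> pres_class Xg Rl [(x, False)]"

lemma pres_gen_carrier: "x \<in> Xg \<Longrightarrow> pres_gen Xg Rl x \<in> carrier (presented_group Xg Rl)"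
  by (simp add: pres_class_carrier)

lemma pres_class_rel: "(l, r) \<in> Rl \<Longrightarrow> pres_class Xg Rl l = pres_class Xg Rl r"
  by (rule pres_class_eqI[OF pres_eq.rel])

lemma pres_class_inv_letter:
  assumes "x \<in> Xg"
  shows "pres_class Xg Rl [(x, True)] = inv\<^bsub>presented_group Xg Rl\<^esub> pres_gen Xg Rl x"
proof -
  have "pres_class Xg Rl [(x, True)] \<otimes>\<^bsub>presented_group Xg Rl\<^esub> pres_gen Xg Rl x
        = \<one>\<^bsub>presented_group Xg Rl\<^esub>"
    using assms pres_eq.cancel[OF assms, of Rl True]
    by (simp add: pres_class_mult presented_group_one pres_class_eqI)
  then show ?thesis
    using group.inv_equality[OF group_presented_group] assms pres_gen_carrier
    by (fastforce simp: presented_group_carrier)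
qed

fun eval_word :: "('c, 'd) monoid_scheme \<Rightarrow> 'a set \<Rightarrow> ('a \<Rightarrow> 'c) \<Rightarrow> 'a word \<Rightarrow> 'c" where
  "eval_word H Xg f [] = \<one>\<^bsub>H\<^esub>"
| "eval_word H Xg f ((x, b) # w) =
     (if x \<in> Xg then (if b then inv\<^bsub>H\<^esub> f x else f x) else \<one>\<^bsub>H\<^esub>) \<otimes>\<^bsub>H\<^esub> eval_word H Xg f w"

lemma eval_word_cong: "(\<And>x. x \<in> Xg \<Longrightarrow> f x = f' x) \<Longrightarrow> eval_word H Xg f w = eval_word H Xg f' w"
  by (induction w) auto

context group
begin

lemma eval_word_closed: "f ` Xg \<subseteq> carrier G \<Longrightarrow> eval_word G Xg f w \<in> carrier G"
  by (induction w) (auto simp: image_subset_iff)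

lemma eval_word_append:
  "f ` Xg \<subseteq> carrier G \<Longrightarrow> eval_word G Xg f (u @ v) = eval_word G Xg f u \<otimes> eval_word G Xg f v"
  by (induction u) (auto simp: eval_word_closed m_assoc image_subset_iff)

lemma eval_word_pres_eq:
  assumes f: "f ` Xg \<subseteq> carrier G"
    and Rl: "\<And>l r. (l, r) \<in> Rl \<Longrightarrow> eval_word G Xg f l = eval_word G Xg f r"
    and "pres_eq Xg Rl u v"
  shows "eval_word G Xg f u = eval_word G Xg f v"
  using assms(3)
proof induction
  case (cong u v p q)
  then show ?case by (simp add: eval_word_append[OF f])
next
  case (cancel x b)
  then show ?case using f by auto
qed (auto simp: Rl)

lemma eval_word_alternating:
  assumes "f ` Xg \<subseteq> carrier G" "s \<in> Xg" "t \<in> Xg"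
  shows "eval_word G Xg f (concat (replicate M [(s, False), (t, False)])) = (f s \<otimes> f t) [^] M"
proof (induction M)
  case (Suc M)
  then show ?case
    using assms nat_pow_Suc2[of "f s \<otimes> f t" M] by (simp add: m_assoc image_subset_iff)
qed simp

end

definition lift_presentation ::
  "('c, 'd) monoid_scheme \<Rightarrow> 'a set \<Rightarrow> ('a \<Rightarrow> 'c) \<Rightarrow> 'a word set \<Rightarrow> 'c" where
  "lift_presentation H Xg f A = eval_word H Xg f (SOME w. w \<in> A)"

locale presentation_map = target: group H for H (structure) +
  fixes Xg :: "'x set" and Rl :: "('x word \<times> 'x word) set" and f :: "'x \<Rightarrow> 'a"
  assumes gens_closed: "f ` Xg \<subseteq> carrier H"
    and rels_hold: "(l, r) \<in> Rl \<Longrightarrow> eval_word H Xg f l = eval_word H Xg f r"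
begin

lemma lift_pres_class:
  assumes "u \<in> gen_words Xg"
  shows "lift_presentation H Xg f (pres_class Xg Rl u) = eval_word H Xg f u"
proof -
  have "(SOME w. w \<in> pres_class Xg Rl u) \<in> pres_class Xg Rl u"
    using pres_class_self[OF assms] by (rule someI)
  then have "pres_eq Xg Rl u (SOME w. w \<in> pres_class Xg Rl u)" by (simp add: pres_class_def)
  then show ?thesis unfolding lift_presentation_def
    using target.eval_word_pres_eq[OF gens_closed rels_hold] by metis
qed

lemma lift_pres_gen: "x \<in> Xg \<Longrightarrow> lift_presentation H Xg f (pres_gen Xg Rl x) = f x"
  using lift_pres_class[of "[(x, False)]"] gens_closed by auto

lemma lift_hom: "lift_presentation H Xg f \<in> hom (presented_group Xg Rl) H"
proof (rule homI)
  fix x assume "x \<in> carrier (presented_group Xg Rl)"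
  then show "lift_presentation H Xg f x \<in> carrier H"
    using lift_pres_class target.eval_word_closed[OF gens_closed]
    by (auto simp: presented_group_carrier)
next
  fix x y assume "x \<in> carrier (presented_group Xg Rl)" "y \<in> carrier (presented_group Xg Rl)"
  then show "lift_presentation H Xg f (x \<otimes>\<^bsub>presented_group Xg Rl\<^esub> y)
      = lift_presentation H Xg f x \<otimes> lift_presentation H Xg f y"
    using lift_pres_class target.eval_word_append[OF gens_closed]
    by (auto simp: presented_group_carrier pres_class_mult)
qed

lemma lift_group_hom: "group_hom (presented_group Xg Rl) H (lift_presentation H Xg f)"
  by (simp add: group_hom_def group_hom_axioms_def group_presented_group lift_hom target.group_axioms)

end

lemma hom_pres_class_eq_eval_word:
  assumes "group H" "h \<in> hom (presented_group Xg Rl) H" "u \<in> gen_words Xg"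
  shows "h (pres_class Xg Rl u) = eval_word H Xg (\<lambda>x. h (pres_gen Xg Rl x)) u"
proof -
  have hom: "group_hom (presented_group Xg Rl) H h"
    using assms group_presented_group by (simp add: group_hom_def group_hom_axioms_def)
  show ?thesis
    using assms(3)
  proof (induction u)
    case Nil
    then show ?case using group_hom.hom_one[OF hom] by (simp add: presented_group_one)
  next
    case (Cons a u)
    obtain x b where a: "a = (x, b)" by (cases a)
    have x: "x \<in> Xg" and u: "u \<in> gen_words Xg" and a1: "[a] \<in> gen_words Xg"
      using Cons.prems a by auto
    have "h (pres_class Xg Rl (a # u)) = h (pres_class Xg Rl [a] \<otimes>\<^bsub>presented_group Xg Rl\<^esub> pres_class Xg Rl u)"
      using pres_class_mult[OF a1 u, of Rl] by simp
    also have "\<dots> = h (pres_class Xg Rl [a]) \<otimes>\<^bsub>H\<^esub> h (pres_class Xg Rl u)"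
      by (rule hom_mult[OF assms(2) pres_class_carrier[OF a1] pres_class_carrier[OF u]])
    also have "\<dots> = eval_word H Xg (\<lambda>x. h (pres_gen Xg Rl x)) (a # u)"
      using a x Cons.IH[OF u] group_hom.hom_inv[OF hom pres_gen_carrier[OF x]]
      by (cases b) (simp_all add: pres_class_inv_letter)
    finally show ?case .
  qed
qed

lemma hom_identity: "(\<lambda>x. x) \<in> hom G G"
  using iso_set_refl by (auto simp: iso_def)

lemma pres_class_eq_eval_word:
  "u \<in> gen_words Xg \<Longrightarrow> pres_class Xg Rl u = eval_word (presented_group Xg Rl) Xg (pres_gen Xg Rl) u"
  by (rule hom_pres_class_eq_eval_word[OF group_presented_group hom_identity])

lemma presented_group_hom_ext:
  assumes "group H" "h \<in> hom (presented_group Xg Rl) H" "h' \<in> hom (presented_group Xg Rl) H"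
    and "\<And>x. x \<in> Xg \<Longrightarrow> h (pres_gen Xg Rl x) = h' (pres_gen Xg Rl x)"
    and "A \<in> carrier (presented_group Xg Rl)"
  shows "h A = h' A"
proof -
  obtain u where u: "u \<in> gen_words Xg" "A = pres_class Xg Rl u"
    using assms(5) by (auto simp: presented_group_carrier)
  have "h A = eval_word H Xg (\<lambda>x. h (pres_gen Xg Rl x)) u"
    unfolding u(2) by (rule hom_pres_class_eq_eval_word[OF assms(1,2) u(1)])
  also have "\<dots> = eval_word H Xg (\<lambda>x. h' (pres_gen Xg Rl x)) u"
    by (rule eval_word_cong) (rule assms(4))
  also have "\<dots> = h' A"
    unfolding u(2) by (rule hom_pres_class_eq_eval_word[OF assms(1,3) u(1), symmetric])
  finally show ?thesis .
qed

lemma presented_groups_iso: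
  assumes "\<phi> \<in> hom (presented_group Xg Rl) (presented_group Yg Ql)"
    and "\<psi> \<in> hom (presented_group Yg Ql) (presented_group Xg Rl)"
    and "\<And>x. x \<in> Xg \<Longrightarrow> \<psi> (\<phi> (pres_gen Xg Rl x)) = pres_gen Xg Rl x"
    and "\<And>y. y \<in> Yg \<Longrightarrow> \<phi> (\<psi> (pres_gen Yg Ql y)) = pres_gen Yg Ql y"
  shows "presented_group Xg Rl \<cong> presented_group Yg Ql"
proof -
  have "\<psi> (\<phi> A) = A" if "A \<in> carrier (presented_group Xg Rl)" for A
    using presented_group_hom_ext[OF group_presented_group hom_compose[OF assms(1,2)] hom_identity _ that]
      assms(3) by simp
  moreover have "\<phi> (\<psi> B) = B" if "B \<in> carrier (presented_group Yg Ql)" for B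
    using presented_group_hom_ext[OF group_presented_group hom_compose[OF assms(2,1)] hom_identity _ that]
      assms(4) by simp
  ultimately have "group_isomorphisms (presented_group Xg Rl) (presented_group Yg Ql) \<phi> \<psi>"
    unfolding group_isomorphisms_def using assms(1,2) by blast
  then show ?thesis by (rule is_isoI[OF group_isomorphisms_imp_iso])
qed

section \<open>Quandles of involutions\<close>

definition conjugation :: "('c, 'd) monoid_scheme \<Rightarrow> 'c \<Rightarrow> 'c \<Rightarrow> 'c" where
  "conjugation G a b = a \<otimes>\<^bsub>G\<^esub> b \<otimes>\<^bsub>G\<^esub> inv\<^bsub>G\<^esub> a"

lemma (in group) conjugation_one [simp]: "b \<in> carrier G \<Longrightarrow> conjugation G \<one> b = b"
  by (simp add: conjugation_def)

lemma (in group) conjugation_mult: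
  "a \<in> carrier G \<Longrightarrow> w \<in> carrier G \<Longrightarrow> c \<in> carrier G
    \<Longrightarrow> conjugation G a (conjugation G w c) = conjugation G (a \<otimes> w) c"
  by (simp add: conjugation_def m_assoc inv_mult_group)

lemma (in group) conjugation_closed [intro, simp]:
  "a \<in> carrier G \<Longrightarrow> b \<in> carrier G \<Longrightarrow> conjugation G a b \<in> carrier G"
  by (simp add: conjugation_def)

lemma (in group) conjugation_square:
  assumes "w \<in> carrier G" "c \<in> carrier G" "c \<otimes> c = \<one>"
  shows "conjugation G w c \<otimes> conjugation G w c = \<one>"
proof -
  have "conjugation G w c \<otimes> conjugation G w c = w \<otimes> c \<otimes> (inv w \<otimes> w) \<otimes> c \<otimes> inv w"
    using assms(1,2) by (simp only: conjugation_def m_assoc m_closed inv_closed)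
  also have "\<dots> = w \<otimes> (c \<otimes> c) \<otimes> inv w"
    using assms(1,2) by (simp add: m_assoc)
  finally show ?thesis
    using assms by simp
qed

lemma hom_conjugation:
  assumes "group_hom G H h" "a \<in> carrier G" "b \<in> carrier G"
  shows "h (conjugation G a b) = conjugation H (h a) (h b)"
proof -
  interpret group_hom G H h by fact
  show ?thesis using assms(2,3) by (simp add: conjugation_def)
qed

definition parity_power :: "'c \<Rightarrow> int \<Rightarrow> 'c \<Rightarrow> 'c" where
  "parity_power e n a = (if even n then e else a)"

lemma bij_int_pow_involution:
  assumes f: "\<And>b. b \<in> A \<Longrightarrow> f b \<in> A" "\<And>b. b \<in> A \<Longrightarrow> f (f b) = b" and b: "b \<in> A"
  shows "bij_int_pow A f n b = (if even n then b else f b)"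
proof -
  have iterate: "(g ^^ k) c = (if even k then c else g c)"
    if "\<And>c. c \<in> A \<Longrightarrow> g c \<in> A" "\<And>c. c \<in> A \<Longrightarrow> g (g c) = c" "c \<in> A" for g k c
    by (induction k) (use that in auto)
  have "inj_on f A" using f by (metis inj_onI)
  then have inv_f: "the_inv_into A f c = f c" if "c \<in> A" for c
    using f that by (intro the_inv_into_f_eq) auto
  show ?thesis
    using iterate[of f, OF f b] iterate[of "the_inv_into A f", OF _ _ b] f inv_f b
    by (auto simp: bij_int_pow_def even_nat_iff)
qed

lemma (in monoid) pow_mult_swap:
  assumes "x \<in> carrier G" "y \<in> carrier G"
  shows "(x \<otimes> y) [^] (k::nat) \<otimes> x = x \<otimes> (y \<otimes> x) [^] k"
proof (induction k)
  case (Suc k)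
  have "(x \<otimes> y) [^] Suc k \<otimes> x = ((x \<otimes> y) [^] k \<otimes> x) \<otimes> (y \<otimes> x)"
    using assms by (simp add: m_assoc)
  also have "\<dots> = (x \<otimes> (y \<otimes> x) [^] k) \<otimes> (y \<otimes> x)"
    by (simp only: Suc)
  also have "\<dots> = x \<otimes> (y \<otimes> x) [^] Suc k"
    using assms by (simp add: m_assoc)
  finally show ?case .
qed (simp add: assms)

lemma Gr_gen_unit: "pres_gen P (Gr_rels P op pw e) e = \<one>\<^bsub>presented_group P (Gr_rels P op pw e)\<^esub>"
  by (simp add: presented_group_one pres_class_rel Gr_rels_def)

lemma Gr_gen_op:
  assumes "a \<in> P" "b \<in> P"
  shows "pres_gen P (Gr_rels P op pw e) (op a b)
    = conjugation (presented_group P (Gr_rels P op pw e))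
        (pres_gen P (Gr_rels P op pw e) a) (pres_gen P (Gr_rels P op pw e) b)"
proof -
  have "pres_gen P (Gr_rels P op pw e) (op a b) = pres_class P (Gr_rels P op pw e) [(a, False), (b, False), (a, True)]"
    using assms by (intro pres_class_rel) (auto simp: Gr_rels_def)
  then show ?thesis
    using assms by (simp add: conjugation_def pres_class_mult pres_class_inv_letter[symmetric])
qed

lemma Gr_gen_pow_two:
  assumes "a \<in> P"
  shows "pres_gen P (Gr_rels P op pw e) (pw 2 a)
    = pres_gen P (Gr_rels P op pw e) a \<otimes>\<^bsub>presented_group P (Gr_rels P op pw e)\<^esub>
      pres_gen P (Gr_rels P op pw e) a"
proof -
  have "pres_gen P (Gr_rels P op pw e) (pw 2 a) = pres_class P (Gr_rels P op pw e) (gen_pow_word a 2)"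
    using assms by (intro pres_class_rel) (auto simp: Gr_rels_def)
  then show ?thesis
    using assms by (simp add: pres_class_mult gen_pow_word_def numeral_2_eq_2)
qed

locale involution_quandle = group G for G (structure) +
  fixes P
  assumes subset: "P \<subseteq> carrier G"
    and one_mem: "\<one> \<in> P"
    and square_one: "a \<in> P \<Longrightarrow> a \<otimes> a = \<one>"
    and conj_mem: "a \<in> P \<Longrightarrow> b \<in> P \<Longrightarrow> a \<otimes> b \<otimes> a \<in> P"
begin

lemma mem_carrier: "a \<in> P \<Longrightarrow> a \<in> carrier G"
  using subset by blast

lemma inv_self: "a \<in> P \<Longrightarrow> inv a = a"
  using square_one mem_carrier inv_equality by blast

lemma conjugation_eq: "a \<in> P \<Longrightarrow> conjugation G a b = a \<otimes> b \<otimes> a"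
  by (simp add: conjugation_def inv_self)

lemma conjugation_mem: "a \<in> P \<Longrightarrow> b \<in> P \<Longrightarrow> conjugation G a b \<in> P"
  by (simp add: conjugation_eq conj_mem)

lemma conjugation_conjugation: "a \<in> P \<Longrightarrow> b \<in> carrier G \<Longrightarrow> conjugation G a (conjugation G a b) = b"
  using mem_carrier square_one by (simp add: conjugation_eq m_assoc flip: m_assoc[of a a])

theorem power_quandle: "power_quandle P (conjugation G) (parity_power \<one>) \<one>"
  unfolding power_quandle_def
proof (intro conjI ballI allI)
  fix a b c n assume a: "a \<in> P" and b: "b \<in> P" and c: "c \<in> P"
  show "bij_betw (conjugation G a) P P"
    using a mem_carrier
    by (intro bij_betw_byWitness[where f'="conjugation G a"]) (auto simp: conjugation_mem conjugation_conjugation)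
  show "conjugation G a (conjugation G b c) = conjugation G (conjugation G a b) (conjugation G a c)"
    using a b c mem_carrier square_one conjugation_mem
    by (simp add: conjugation_eq m_assoc flip: m_assoc[of a a])
  have "bij_int_pow P (conjugation G a) n b = (if even n then b else conjugation G a b)"
    by (rule bij_int_pow_involution) (use a b mem_carrier in \<open>auto simp: conjugation_mem conjugation_conjugation\<close>)
  then show "conjugation G (parity_power \<one> n a) b = bij_int_pow P (conjugation G a) n b"
    using b mem_carrier by (simp add: parity_power_def conjugation_def)
qed (use one_mem mem_carrier square_one conj_mem in \<open>auto simp: conjugation_eq conjugation_mem parity_power_def\<close>)

abbreviation "Gr_rels_P \<equiv> Gr_rels P (conjugation G) (parity_power \<one>) \<one>"
abbreviation "Gr_P \<equiv> presented_group P Gr_rels_P"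
abbreviation "Gr_gen \<equiv> pres_gen P Gr_rels_P"

sublocale Gr: group Gr_P by (rule group_presented_group)

lemma Gr_gen_carrier: "a \<in> P \<Longrightarrow> Gr_gen a \<in> carrier Gr_P"
  by (rule pres_gen_carrier)

lemma Gr_gen_one: "Gr_gen \<one> = \<one>\<^bsub>Gr_P\<^esub>"
  by (rule Gr_gen_unit)

lemma Gr_gen_square: "a \<in> P \<Longrightarrow> Gr_gen a \<otimes>\<^bsub>Gr_P\<^esub> Gr_gen a = \<one>\<^bsub>Gr_P\<^esub>"
  using Gr_gen_pow_two[of a P "conjugation G" "parity_power \<one>" \<one>]
  by (simp add: parity_power_def Gr_gen_one)

lemma Gr_gen_inv: "a \<in> P \<Longrightarrow> inv\<^bsub>Gr_P\<^esub> Gr_gen a = Gr_gen a"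
  using Gr_gen_square Gr_gen_carrier Gr.inv_equality by blast

lemma Gr_gen_conjugation:
  "a \<in> P \<Longrightarrow> b \<in> P \<Longrightarrow> Gr_gen (conjugation G a b) = conjugation Gr_P (Gr_gen a) (Gr_gen b)"
  by (rule Gr_gen_op)

lemma eval_word_replicate:
  "a \<in> P \<Longrightarrow> eval_word G P id (replicate k (a, b)) = (if even k then \<one> else a)"
  by (induction k) (auto simp: inv_self square_one mem_carrier)

abbreviation "from_Gr \<equiv> lift_presentation G P id"

sublocale from_Gr: presentation_map G P Gr_rels_P id
proof
  fix l r assume "(l, r) \<in> Gr_rels_P"
  then show "eval_word G P id l = eval_word G P id r"
    using conjugation_mem mem_carrier one_mem
    by (auto simp: Gr_rels_def conjugation_def m_assoc gen_pow_word_def eval_word_replicate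
        parity_power_def even_nat_iff)
qed (use subset in auto)

text \<open>\<open>(ab)\<^sup>k\<^sup>+\<^sup>1a = a ((ba)\<^sup>kb) a\<close> writes the alternating product as an iterated conjugate, on
  which \<open>Gr_gen\<close> is multiplicative.\<close>
lemma alternating_product_lift:
  assumes "a \<in> P" "b \<in> P"
  shows "(a \<otimes> b) [^] (k::nat) \<otimes> a \<in> P \<and> Gr_gen ((a \<otimes> b) [^] k \<otimes> a) = (Gr_gen a \<otimes>\<^bsub>Gr_P\<^esub> Gr_gen b) [^]\<^bsub>Gr_P\<^esub> k \<otimes>\<^bsub>Gr_P\<^esub> Gr_gen a"
  using assms
proof (induction k arbitrary: a b)
  case 0
  then show ?case using mem_carrier Gr_gen_carrier by simp
next
  case (Suc k)
  let ?c = "(b \<otimes> a) [^] k \<otimes> b"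
  have c: "?c \<in> P" "Gr_gen ?c = (Gr_gen b \<otimes>\<^bsub>Gr_P\<^esub> Gr_gen a) [^]\<^bsub>Gr_P\<^esub> k \<otimes>\<^bsub>Gr_P\<^esub> Gr_gen b"
    using Suc.IH[of b a] Suc.prems by auto
  have ab: "a \<in> carrier G" "b \<in> carrier G"
    using Suc.prems mem_carrier by auto
  have "(a \<otimes> b) [^] Suc k \<otimes> a = a \<otimes> (b \<otimes> a) [^] Suc k"
    by (rule pow_mult_swap[OF ab])
  also have "\<dots> = conjugation G a ?c"
    using ab Suc.prems by (simp add: conjugation_eq m_assoc)
  finally have in_G: "(a \<otimes> b) [^] Suc k \<otimes> a = conjugation G a ?c" .
  have gab: "Gr_gen a \<in> carrier Gr_P" "Gr_gen b \<in> carrier Gr_P"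
    using Suc.prems Gr_gen_carrier by auto
  have "Gr_gen ((a \<otimes> b) [^] Suc k \<otimes> a) = conjugation Gr_P (Gr_gen a) (Gr_gen ?c)"
    unfolding in_G by (rule Gr_gen_conjugation[OF Suc.prems(1) c(1)])
  also have "\<dots> = Gr_gen a \<otimes>\<^bsub>Gr_P\<^esub> (Gr_gen b \<otimes>\<^bsub>Gr_P\<^esub> Gr_gen a) [^]\<^bsub>Gr_P\<^esub> Suc k"
    using gab Suc.prems by (simp add: conjugation_def Gr_gen_inv c Gr.m_assoc)
  also have "\<dots> = (Gr_gen a \<otimes>\<^bsub>Gr_P\<^esub> Gr_gen b) [^]\<^bsub>Gr_P\<^esub> Suc k \<otimes>\<^bsub>Gr_P\<^esub> Gr_gen a"
    by (rule Gr.pow_mult_swap[OF gab, symmetric])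
  finally show ?case
    using in_G conjugation_mem Suc.prems c(1) by simp
qed

lemma dihedral_relation_lift:
  assumes "a \<in> P" "b \<in> P" "(a \<otimes> b) [^] (M::nat) = \<one>"
  shows "(Gr_gen a \<otimes>\<^bsub>Gr_P\<^esub> Gr_gen b) [^]\<^bsub>Gr_P\<^esub> M = \<one>\<^bsub>Gr_P\<^esub>"
proof (cases M)
  case (Suc k)
  have "(a \<otimes> b) [^] k \<otimes> a \<otimes> b = \<one>"
    using assms Suc mem_carrier by (simp add: m_assoc)
  then have "(a \<otimes> b) [^] k \<otimes> a = b"
    using assms mem_carrier inv_self by (metis inv_equality nat_pow_closed m_closed)
  then have "(Gr_gen a \<otimes>\<^bsub>Gr_P\<^esub> Gr_gen b) [^]\<^bsub>Gr_P\<^esub> k \<otimes>\<^bsub>Gr_P\<^esub> Gr_gen a = Gr_gen b"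
    using alternating_product_lift[OF assms(1,2)] by metis
  moreover have "(Gr_gen a \<otimes>\<^bsub>Gr_P\<^esub> Gr_gen b) [^]\<^bsub>Gr_P\<^esub> M
      = (Gr_gen a \<otimes>\<^bsub>Gr_P\<^esub> Gr_gen b) [^]\<^bsub>Gr_P\<^esub> k \<otimes>\<^bsub>Gr_P\<^esub> Gr_gen a \<otimes>\<^bsub>Gr_P\<^esub> Gr_gen b"
    using Suc assms Gr_gen_carrier by (simp add: Gr.m_assoc)
  ultimately show ?thesis
    using assms Gr_gen_square by simp
qed simp

end

section \<open>Presentations by involutions and Coxeter groups\<close>

text \<open>For a Coxeter presentation these are the reflections, together with \<open>1\<close>.\<close>
definition generator_conjugates :: "'a set \<Rightarrow> ('a word \<times> 'a word) set \<Rightarrow> 'a word set set" where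
  "generator_conjugates Xg Rl = insert \<one>\<^bsub>presented_group Xg Rl\<^esub>
     {conjugation (presented_group Xg Rl) w (pres_gen Xg Rl x) | w x.
        w \<in> carrier (presented_group Xg Rl) \<and> x \<in> Xg}"

locale involutive_presentation =
  fixes Xg :: "'a set" and Rl :: "('a word \<times> 'a word) set"
  assumes gen_square:
    "x \<in> Xg \<Longrightarrow> pres_gen Xg Rl x \<otimes>\<^bsub>presented_group Xg Rl\<^esub> pres_gen Xg Rl x = \<one>\<^bsub>presented_group Xg Rl\<^esub>"
begin

abbreviation "W \<equiv> presented_group Xg Rl"
abbreviation "gen \<equiv> pres_gen Xg Rl"
abbreviation "conjugates \<equiv> generator_conjugates Xg Rl"

sublocale W: group W by (rule group_presented_group)

lemma gen_inv: "x \<in> Xg \<Longrightarrow> inv\<^bsub>W\<^esub> gen x = gen x"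
  using W.inv_equality gen_square pres_gen_carrier by metis

lemma conjugates_cases [consumes 1, case_names one conj]:
  assumes "p \<in> conjugates"
  obtains "p = \<one>\<^bsub>W\<^esub>"
    | w x where "w \<in> carrier W" "x \<in> Xg" "p = conjugation W w (gen x)"
  using assms unfolding generator_conjugates_def by blast

lemma conjugates_conjugation_mem:
  "w \<in> carrier W \<Longrightarrow> x \<in> Xg \<Longrightarrow> conjugation W w (gen x) \<in> conjugates"
  unfolding generator_conjugates_def by blast

lemma one_mem_conjugates: "\<one>\<^bsub>W\<^esub> \<in> conjugates"
  by (simp add: generator_conjugates_def)

lemma gen_mem:
  assumes "x \<in> Xg"
  shows "gen x \<in> conjugates"
  using conjugates_conjugation_mem[OF W.one_closed assms] W.conjugation_one[OF pres_gen_carrier[OF assms]]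
  by simp

lemma conjugates_carrier:
  assumes "p \<in> conjugates"
  shows "p \<in> carrier W"
  using assms by (cases rule: conjugates_cases) (auto intro: pres_gen_carrier)

sublocale involution_quandle W conjugates
proof
  fix a b assume a: "a \<in> conjugates" and b: "b \<in> conjugates"
  show "a \<otimes>\<^bsub>W\<^esub> a = \<one>\<^bsub>W\<^esub>"
    using a by (cases rule: conjugates_cases) (simp_all add: W.conjugation_square pres_gen_carrier gen_square)
  then have "inv\<^bsub>W\<^esub> a = a"
    using a conjugates_carrier W.inv_equality by metis
  then have "a \<otimes>\<^bsub>W\<^esub> b \<otimes>\<^bsub>W\<^esub> a = conjugation W a b"
    by (simp add: conjugation_def)
  also have "\<dots> \<in> conjugates"
    using b
  proof (cases rule: conjugates_cases)
    case one
    then show ?thesis using a conjugates_carrier one_mem_conjugates by (simp add: conjugation_def)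
  next
    case (conj w x)
    have "a \<otimes>\<^bsub>W\<^esub> w \<in> carrier W"
      using a conj(1) conjugates_carrier by simp
    then show ?thesis
      using conj conjugates_conjugation_mem
        W.conjugation_mult[OF conjugates_carrier[OF a] conj(1) pres_gen_carrier[OF conj(2)]]
      by simp
  qed
  finally show "a \<otimes>\<^bsub>W\<^esub> b \<otimes>\<^bsub>W\<^esub> a \<in> conjugates" .
qed (auto simp: conjugates_carrier one_mem_conjugates)

lemma generator_conjugates_induct [consumes 1, case_names one gen conj]:
  assumes "p \<in> conjugates"
    and "Q \<one>\<^bsub>W\<^esub>"
    and "\<And>x. x \<in> Xg \<Longrightarrow> Q (gen x)"
    and "\<And>x q. x \<in> Xg \<Longrightarrow> q \<in> conjugates \<Longrightarrow> Q q \<Longrightarrow> Q (conjugation W (gen x) q)"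
  shows "Q p"
proof -
  have along_words: "Q (conjugation W (pres_class Xg Rl u) (gen x))" if "u \<in> gen_words Xg" "x \<in> Xg" for u x
    using that(1)
  proof (induction u)
    case Nil
    then show ?case
      using assms(3) that(2) W.conjugation_one[OF pres_gen_carrier[OF that(2)]]
      by (simp add: presented_group_one[symmetric])
  next
    case (Cons a u)
    obtain y b where a: "a = (y, b)" by (cases a)
    have y: "y \<in> Xg" and u: "u \<in> gen_words Xg" using Cons.prems a by auto
    have "pres_class Xg Rl (a # u) = gen y \<otimes>\<^bsub>W\<^esub> pres_class Xg Rl u"
      using pres_class_mult[of "[a]" Xg u Rl] a y u gen_inv
      by (cases b) (simp_all add: pres_class_inv_letter)
    then have "conjugation W (pres_class Xg Rl (a # u)) (gen x)
        = conjugation W (gen y) (conjugation W (pres_class Xg Rl u) (gen x))"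
      using W.conjugation_mult[OF pres_gen_carrier[OF y] pres_class_carrier[OF u] pres_gen_carrier[OF that(2)]]
      by simp
    moreover have "conjugation W (pres_class Xg Rl u) (gen x) \<in> conjugates"
      using conjugates_conjugation_mem[OF pres_class_carrier[OF u] that(2)] .
    ultimately show ?case
      using assms(4) y Cons.IH[OF u] by simp
  qed
  from assms(1) show ?thesis
  proof (cases rule: conjugates_cases)
    case one
    then show ?thesis using assms(2) by simp
  next
    case (conj w x)
    then obtain u where "u \<in> gen_words Xg" "w = pres_class Xg Rl u"
      by (auto simp: presented_group_carrier)
    then show ?thesis using conj along_words by simp
  qed
qed

end

locale coxeter_presentation =
  fixes S :: "'b set" and m :: "'b \<Rightarrow> 'b \<Rightarrow> enat"

sublocale coxeter_presentation \<subseteq> involutive_presentation S "coxeter_rels S m"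
proof
  fix s assume s: "s \<in> S"
  then have "([(s, False), (s, False)], []) \<in> coxeter_rels S m"
    by (simp add: coxeter_rels_def)
  from pres_class_rel[OF this] show "pres_gen S (coxeter_rels S m) s \<otimes>\<^bsub>presented_group S (coxeter_rels S m)\<^esub> pres_gen S (coxeter_rels S m) s
      = \<one>\<^bsub>presented_group S (coxeter_rels S m)\<^esub>"
    using s by (simp add: pres_class_mult presented_group_one)
qed

context coxeter_presentation
begin

lemma gen_braid:
  assumes "s \<in> S" "t \<in> S" "s \<noteq> t" "m s t \<noteq> \<infinity>"
  shows "(gen s \<otimes>\<^bsub>W\<^esub> gen t) [^]\<^bsub>W\<^esub> the_enat (m s t) = \<one>\<^bsub>W\<^esub>"
proof -
  let ?l = "concat (replicate (the_enat (m s t)) [(s, False), (t, False)])"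
  have words: "concat (replicate M [(s, False), (t, False)]) \<in> gen_words S" for M
    using assms by (induction M) simp_all
  have "gen ` S \<subseteq> carrier W"
    by (rule image_subsetI) (rule pres_gen_carrier)
  then have "(gen s \<otimes>\<^bsub>W\<^esub> gen t) [^]\<^bsub>W\<^esub> the_enat (m s t) = eval_word W S gen ?l"
    by (rule W.eval_word_alternating[symmetric]) (use assms in auto)
  also have "\<dots> = pres_class S (coxeter_rels S m) ?l"
    by (rule pres_class_eq_eval_word[OF words, symmetric])
  also have "\<dots> = \<one>\<^bsub>W\<^esub>"
    using assms pres_class_rel[of ?l "[]" "coxeter_rels S m" S]
    by (auto simp: presented_group_one coxeter_rels_def)
  finally show ?thesis .
qed

sublocale to_Gr: presentation_map Gr_P S "coxeter_rels S m" "\<lambda>s. Gr_gen (gen s)"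
proof
  show "(\<lambda>s. Gr_gen (gen s)) ` S \<subseteq> carrier Gr_P"
    using gen_mem Gr_gen_carrier by auto
next
  fix l r assume "(l, r) \<in> coxeter_rels S m"
  then consider s where "s \<in> S" "l = [(s, False), (s, False)]" "r = []"
    | s t where "s \<in> S" "t \<in> S" "s \<noteq> t" "m s t \<noteq> \<infinity>"
        "l = concat (replicate (the_enat (m s t)) [(s, False), (t, False)])" "r = []"
    unfolding coxeter_rels_def by blast
  then show "eval_word Gr_P S (\<lambda>s. Gr_gen (gen s)) l = eval_word Gr_P S (\<lambda>s. Gr_gen (gen s)) r"
  proof cases
    case 1
    then show ?thesis using gen_mem Gr_gen_carrier Gr_gen_square by simp
  next
    case 2
    then show ?thesis
      using gen_mem Gr_gen_carrier gen_braid dihedral_relation_lift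
      by (simp add: Gr.eval_word_alternating image_subset_iff)
  qed
qed

abbreviation "to_Gr \<equiv> lift_presentation Gr_P S (\<lambda>s. Gr_gen (gen s))"

lemma to_Gr_generator_conjugate: "p \<in> conjugates \<Longrightarrow> to_Gr p = Gr_gen p"
proof (induction rule: generator_conjugates_induct)
  case one
  then show ?case
    using group_hom.hom_one[OF to_Gr.lift_group_hom] Gr_gen_one by simp
next
  case (gen x)
  then show ?case by (rule to_Gr.lift_pres_gen)
next
  case (conj x q)
  then show ?case
    using hom_conjugation[OF to_Gr.lift_group_hom] gen_mem conjugates_carrier pres_gen_carrier
      to_Gr.lift_pres_gen Gr_gen_conjugation by simp
qed

theorem iso_Gr: "W \<cong> Gr_P"
proof (rule presented_groups_iso)
  show "to_Gr \<in> hom W Gr_P" by (rule to_Gr.lift_hom)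
  show "from_Gr \<in> hom Gr_P W" by (rule from_Gr.lift_hom)
  show "from_Gr (to_Gr (gen s)) = gen s" if "s \<in> S" for s
    using that gen_mem to_Gr.lift_pres_gen from_Gr.lift_pres_gen by simp
  show "to_Gr (from_Gr (Gr_gen p)) = Gr_gen p" if "p \<in> conjugates" for p
    using that from_Gr.lift_pres_gen to_Gr_generator_conjugate by simp
qed

end

theorem mainTheorem16:
  fixes S :: "'b set" and m :: "'b \<Rightarrow> 'b \<Rightarrow> enat"
    and W :: "('c, 'd) monoid_scheme"
  assumes "coxeter_matrix S m"
    and "group W"
    and "W \<cong> coxeter_group S m"
  shows "\<exists>(P :: 'b word set set) op pw e.
           power_quandle P op pw e \<and> W \<cong> Gr P op pw e"
proof -
  interpret coxeter_presentation S m .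
  show ?thesis
  proof (intro exI conjI)
    show "power_quandle conjugates (conjugation (coxeter_group S m)) (parity_power \<one>\<^bsub>coxeter_group S m\<^esub>) \<one>\<^bsub>coxeter_group S m\<^esub>"
      unfolding coxeter_group_def by (rule power_quandle)
    show "W \<cong> Gr conjugates (conjugation (coxeter_group S m)) (parity_power \<one>\<^bsub>coxeter_group S m\<^esub>) \<one>\<^bsub>coxeter_group S m\<^esub>"
      using iso_trans[OF assms(3)[unfolded coxeter_group_def] iso_Gr] by (simp add: Gr_def coxeter_group_def)
  qed
qed

end
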